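(* Let $E$ be a finite set of events with timestamps $\tau(e)\in\mathbb{R}$, let $t_w>0$ be real and $n\ge1$ an integer, and let $\mathcal{I}$ be the family of all $T\subseteq E$ such that $|\{e\in T:\tau(e)\in[t,t+t_w)\}|\le n$ for every $t\in\mathbb{R}$. Let $T\in\mathcal{I}$ and $a\in E$ with $T\cup\{a\}\notin\mathcal{I}$. Then $|\{e\in T:\tau(e)\in(\tau(a)-t_w,\tau(a)+t_w)\}|\ge n$.
   Context: In the paper, an element $a$ with $T\in\mathcal{I}$ but $T\cup\{a\}\notin\mathcal{I}$ is called blocked in $T$, and $(\tau(a)-t_w,\tau(a)+t_w)$ is called the ball around $a$. *)

theory Defs
  imports Complex_Main
begin

definition window_indep :: "'e set \<Rightarrow> ('e \<Rightarrow> real) \<Rightarrow> real \<Rightarrow> nat \<Rightarrow> 'e set set" where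
  "window_indep E \<tau> tw n =
     {T. T \<subseteq> E \<and> (\<forall>t::real. card {e \<in> T. \<tau> e \<in> {t..<t + tw}} \<le> n)}"

end

theory Submission
  imports Defs
begin

text \<open>If adding a to T breaks the window condition, the offending window [t, t + tw)
  contains a and already n events of T; any window containing \<tau> a lies inside the ball
  around a, so the ball contains at least n events of T.\<close>

lemma blocked_has_full_window:
  assumes "finite T"
    and "\<And>t. card {e \<in> T. \<tau> e \<in> {t..<t + tw}} \<le> n"
    and "\<not> card {e \<in> T \<union> {a}. \<tau> e \<in> {t..<t + tw}} \<le> n"
  shows "\<tau> a \<in> {t..<t + tw}" and "n \<le> card {e \<in> T. \<tau> e \<in> {t..<t + tw}}"
proof -
  let ?S = "{e \<in> T. \<tau> e \<in> {t..<t + tw}}"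
  have a_notin_T: "a \<notin> T"
    using assms(2)[of t] assms(3) by (metis insert_absorb insert_is_Un sup_commute)
  show a_in_window: "\<tau> a \<in> {t..<t + tw}"
  proof (rule ccontr)
    assume "\<tau> a \<notin> {t..<t + tw}"
    then have "{e \<in> T \<union> {a}. \<tau> e \<in> {t..<t + tw}} = ?S" by auto
    then show False using assms(2)[of t] assms(3) by simp
  qed
  then have "{e \<in> T \<union> {a}. \<tau> e \<in> {t..<t + tw}} = insert a ?S" by auto
  then show "n \<le> card ?S"
    using assms(1,3) a_notin_T by simp
qed

lemma window_subset_ball:
  fixes x t tw :: real
  assumes "x \<in> {t..<t + tw}"
  shows "{t..<t + tw} \<subseteq> {x - tw<..<x + tw}"
  using assms by auto

theorem lemma2:
  fixes E :: "'e set" and \<tau> :: "'e \<Rightarrow> real" and tw :: real and n :: nat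
    and T :: "'e set" and a :: 'e
  assumes "finite E" and "tw > 0" and "n \<ge> 1"
    and "T \<in> window_indep E \<tau> tw n"
    and "a \<in> E"
    and "T \<union> {a} \<notin> window_indep E \<tau> tw n"
  shows "card {e \<in> T. \<tau> e \<in> {\<tau> a - tw<..<\<tau> a + tw}} \<ge> n"
proof -
  have T_sub: "T \<subseteq> E" and T_windows: "\<And>t. card {e \<in> T. \<tau> e \<in> {t..<t + tw}} \<le> n"
    using assms(4) unfolding window_indep_def by auto
  have "finite T" using T_sub assms(1) finite_subset by blast
  obtain t where blocked: "\<not> card {e \<in> T \<union> {a}. \<tau> e \<in> {t..<t + tw}} \<le> n"
    using assms(5,6) T_sub unfolding window_indep_def by auto
  note full = blocked_has_full_window[OF \<open>finite T\<close> T_windows blocked]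
  have "n \<le> card {e \<in> T. \<tau> e \<in> {t..<t + tw}}" by (fact full(2))
  also have "\<dots> \<le> card {e \<in> T. \<tau> e \<in> {\<tau> a - tw<..<\<tau> a + tw}}"
    using window_subset_ball[OF full(1)] \<open>finite T\<close> by (intro card_mono) auto
  finally show ?thesis .
qed

end
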